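(* Let $n\ge1$ and $P=\Phi^+(A_n)=\{(i,j)\colon 1\le i,j\le n,\ i+j\ge n+1\}$. Then $\sum_{p\in P}(-1)^{\mathrm{rk}(p)}\mathbb{1}_p\equiv \frac{n}{2}$, where $\mathrm{rk}(i,j)=i+j-(n+1)$.
   Context: $P$ is ordered by $(i,j)\le(i',j')$ iff $i\le i'$ and $j\le j'$; $\mathrm{rk}$ is its rank function. $\mathcal{J}(P)$ is the set of order ideals of $P$. For $x\in P$, $I\in\mathcal{J}(P)$: $\mathbb{1}_x(I)=1$ if $x\in I$, else $0$; $T_x^+(I)=1$ if $x$ is a minimal element of $P\setminus I$, else $0$; $T_x^-(I)=1$ if $x$ is a maximal element of $I$, else $0$; $T_x=T_x^+-T_x^-$. For $f,g\colon\mathcal{J}(P)\to\mathbb{R}$, $f\equiv g$ means $f-g=\sum_{x\in P}c_xT_x$ for some real constants $c_x$; a real number denotes the corresponding constant function. *)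

theory Defs
  imports Main "HOL.Real"
begin

definition ple :: "nat \<times> nat \<Rightarrow> nat \<times> nat \<Rightarrow> bool" where
  "ple x y \<longleftrightarrow> fst x \<le> fst y \<and> snd x \<le> snd y"

definition stair :: "nat \<Rightarrow> (nat \<times> nat) set" where
  "stair n = {(i, j). 1 \<le> i \<and> i \<le> n \<and> 1 \<le> j \<and> j \<le> n \<and> i + j \<ge> n + 1}"

text \<open>Rank function rk(i,j) = i + j - (n+1) (nonnegative on stair n).\<close>
definition rk :: "nat \<Rightarrow> nat \<times> nat \<Rightarrow> nat" where
  "rk n p = fst p + snd p - (n + 1)"

definition order_ideals :: "(nat \<times> nat) set \<Rightarrow> (nat \<times> nat) set set" where
  "order_ideals P = {I. I \<subseteq> P \<and> (\<forall>x\<in>I. \<forall>y\<in>P. ple y x \<longrightarrow> y \<in> I)}"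

definition indic :: "nat \<times> nat \<Rightarrow> (nat \<times> nat) set \<Rightarrow> real" where
  "indic x I = (if x \<in> I then 1 else 0)"

definition Tplus :: "(nat \<times> nat) set \<Rightarrow> nat \<times> nat \<Rightarrow> (nat \<times> nat) set \<Rightarrow> real" where
  "Tplus P x I = (if x \<in> P - I \<and> (\<forall>y\<in>P - I. ple y x \<longrightarrow> y = x) then 1 else 0)"

definition Tminus :: "(nat \<times> nat) set \<Rightarrow> nat \<times> nat \<Rightarrow> (nat \<times> nat) set \<Rightarrow> real" where
  "Tminus P x I = (if x \<in> I \<and> (\<forall>y\<in>I. ple x y \<longrightarrow> y = x) then 1 else 0)"

definition toggle :: "(nat \<times> nat) set \<Rightarrow> nat \<times> nat \<Rightarrow> (nat \<times> nat) set \<Rightarrow> real" where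
  "toggle P x I = Tplus P x I - Tminus P x I"

text \<open>f \<equiv> g on J(P): f - g is a linear combination of toggleability statistics.\<close>
definition toggle_equiv ::
  "(nat \<times> nat) set \<Rightarrow> ((nat \<times> nat) set \<Rightarrow> real) \<Rightarrow> ((nat \<times> nat) set \<Rightarrow> real) \<Rightarrow> bool" where
  "toggle_equiv P f g \<longleftrightarrow>
     (\<exists>c :: nat \<times> nat \<Rightarrow> real. \<forall>I\<in>order_ideals P. f I - g I = (\<Sum>x\<in>P. c x * toggle P x I))"

end

theory Submission
  imports Defs
begin

(* Weight every element of even rank by -1/2 and argue by induction over order ideals,
   removing one maximal element m = (i, j) at a time. Removing m changes the signed count
   by (-1)^rk(m). In the staircase T_x only depends on x and its four unit neighbours, so
   the toggle statistics change only at m, where T_m drops by 2, and at the neighbours of m.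
   If rk(m) is even, the neighbours have odd rank and carry no weight. If rk(m) is odd, m
   carries no weight and its neighbours pair up as (i - 1, j), (i, j + 1) and (i, j - 1),
   (i + 1, j): in each pair exactly one statistic rises by 1, which one being decided by
   whether (i - 1, j + 1), resp. (i + 1, j - 1), lies in the ideal. At the empty ideal both
   sides equal -n/2, since there T_x = 1 exactly at the n minimal elements, those of rank 0. *)

definition ple_maximal :: "(nat \<times> nat) set \<Rightarrow> nat \<times> nat \<Rightarrow> bool" where
  "ple_maximal S x \<longleftrightarrow> x \<in> S \<and> (\<forall>y\<in>S. ple x y \<longrightarrow> y = x)"

definition ple_minimal :: "(nat \<times> nat) set \<Rightarrow> nat \<times> nat \<Rightarrow> bool" where
  "ple_minimal S x \<longleftrightarrow> x \<in> S \<and> (\<forall>y\<in>S. ple y x \<longrightarrow> y = x)"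

lemma toggle_eq:
  "toggle P x I = (if ple_minimal (P - I) x then 1 else 0) - (if ple_maximal I x then 1 else 0)"
  by (simp add: toggle_def Tplus_def Tminus_def ple_minimal_def ple_maximal_def)

lemma toggle_outside: "I \<subseteq> P \<Longrightarrow> x \<notin> P \<Longrightarrow> toggle P x I = 0"
  by (auto simp: toggle_eq ple_minimal_def ple_maximal_def)

lemma order_idealsD:
  assumes "I \<in> order_ideals P"
  shows "I \<subseteq> P" and "x \<in> I \<Longrightarrow> y \<in> P \<Longrightarrow> ple y x \<Longrightarrow> y \<in> I"
  using assms by (auto simp: order_ideals_def)

lemma order_ideals_Diff_maximal:
  "I \<in> order_ideals P \<Longrightarrow> ple_maximal I m \<Longrightarrow> I - {m} \<in> order_ideals P"
  by (auto simp: order_ideals_def ple_maximal_def)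

lemma ex_ple_maximal:
  assumes "finite S" "S \<noteq> {}"
  shows "\<exists>m. ple_maximal S m"
proof -
  define s where "s p = fst p + snd p" for p :: "nat \<times> nat"
  have "Max (s ` S) \<in> s ` S" using assms by simp
  then obtain m where m: "m \<in> S" "s m = Max (s ` S)" by auto
  have "y = m" if "y \<in> S" "ple m y" for y
  proof -
    have "s y \<le> s m" using Max_ge[of "s ` S" "s y"] assms(1) that(1) m(2) by simp
    then show ?thesis using that(2) by (auto simp: s_def ple_def prod_eq_iff)
  qed
  then show ?thesis using m(1) unfolding ple_maximal_def by blast
qed

lemma order_ideal_induct [consumes 2, case_names empty remove_maximal]:
  assumes "finite P" "I \<in> order_ideals P"
    and empty: "Q {}"
    and remove_maximal:
      "\<And>I m. I \<in> order_ideals P \<Longrightarrow> ple_maximal I m \<Longrightarrow> Q (I - {m}) \<Longrightarrow> Q I"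
  shows "Q I"
proof -
  have "finite I" using assms(1,2) by (auto dest: order_idealsD intro: finite_subset)
  then show ?thesis using assms(2)
  proof (induction I rule: finite_psubset_induct)
    case (psubset I)
    show ?case
    proof (cases "I = {}")
      case True
      then show ?thesis using empty by simp
    next
      case False
      then obtain m where m: "ple_maximal I m" using ex_ple_maximal psubset.hyps by blast
      then have "I - {m} \<subset> I" by (auto simp: ple_maximal_def)
      then have "Q (I - {m})"
        using psubset.IH order_ideals_Diff_maximal[OF psubset.prems m] by blast
      then show ?thesis using remove_maximal[OF psubset.prems m] by blast
    qed
  qed
qed

lemma sum_indic_Diff:
  assumes "finite P" "I \<subseteq> P" "m \<in> I"
  shows "(\<Sum>p\<in>P. w p * indic p I) - (\<Sum>p\<in>P. w p * indic p (I - {m})) = w m"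
proof -
  have "(\<Sum>p\<in>P. w p * indic p I) - (\<Sum>p\<in>P. w p * indic p (I - {m}))
      = (\<Sum>p\<in>P. if p = m then w m else 0)"
    unfolding sum_subtractf[symmetric] by (rule sum.cong) (auto simp: indic_def assms(3))
  then show ?thesis using assms by auto
qed

definition toggle_change ::
    "(nat \<times> nat) set \<Rightarrow> (nat \<times> nat) set \<Rightarrow> nat \<times> nat \<Rightarrow> nat \<times> nat \<Rightarrow> real" where "toggle_change P I m x = toggle P x I - toggle P x (I - {m})"

lemma toggle_change_maximal_self:
  assumes "I \<in> order_ideals P" "ple_maximal I m"
  shows "toggle_change P I m m = -2"
proof -
  have "ple_minimal (P - (I - {m})) m"
    using assms by (auto simp: ple_minimal_def ple_maximal_def order_ideals_def)
  moreover have "\<not> ple_minimal (P - I) m" "\<not> ple_maximal (I - {m}) m"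
    using assms(2) by (auto simp: ple_minimal_def ple_maximal_def)
  ultimately show ?thesis using assms(2) by (simp add: toggle_change_def toggle_eq)
qed

lemma toggle_change_outside: "I \<subseteq> P \<Longrightarrow> x \<notin> P \<Longrightarrow> toggle_change P I m x = 0"
  using toggle_outside[of I P x] toggle_outside[of "I - {m}" P x] by (auto simp: toggle_change_def)

lemma finite_stair: "finite (stair n)"
  by (rule finite_subset[of _ "{1..n} \<times> {1..n}"]) (auto simp: stair_def)

lemma stair_convex:
  "x \<in> stair n \<Longrightarrow> y \<in> stair n \<Longrightarrow> ple x z \<Longrightarrow> ple z y \<Longrightarrow> z \<in> stair n"
  by (auto simp: stair_def ple_def)

lemma ple_lower_neighbour:
  "ple y (a, b) \<Longrightarrow> y \<noteq> (a, b) \<Longrightarrow> \<exists>z\<in>{(a - 1, b), (a, b - 1)}. ple y z"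
  by (cases y) (auto simp: ple_def)

lemma ple_upper_neighbour:
  "ple (a, b) y \<Longrightarrow> y \<noteq> (a, b) \<Longrightarrow> \<exists>z\<in>{(a + 1, b), (a, b + 1)}. ple z y"
  by (cases y) (auto simp: ple_def)

lemma ple_minimal_stair_Diff_iff:
  assumes I: "I \<in> order_ideals (stair n)" and x: "(a, b) \<in> stair n"
  shows "ple_minimal (stair n - I) (a, b) \<longleftrightarrow> (a, b) \<notin> I
           \<and> ((a - 1, b) \<in> stair n \<longrightarrow> (a - 1, b) \<in> I)
           \<and> ((a, b - 1) \<in> stair n \<longrightarrow> (a, b - 1) \<in> I)"
    (is "_ \<longleftrightarrow> ?rhs")
proof
  assume min: "ple_minimal (stair n - I) (a, b)"
  have "z \<in> I" if "z \<in> {(a - 1, b), (a, b - 1)}" "z \<in> stair n" for z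
  proof (rule ccontr)
    assume "z \<notin> I"
    moreover have "ple z (a, b)" "z \<noteq> (a, b)" using that x by (auto simp: ple_def stair_def)
    ultimately show False using min that(2) by (auto simp: ple_minimal_def)
  qed
  then show ?rhs using min by (auto simp: ple_minimal_def)
next
  assume rhs: ?rhs
  have "y = (a, b)" if y: "y \<in> stair n - I" "ple y (a, b)" for y
  proof (rule ccontr)
    assume "y \<noteq> (a, b)"
    then obtain z where z: "z \<in> {(a - 1, b), (a, b - 1)}" "ple y z"
      using ple_lower_neighbour[OF y(2)] by blast
    then have "z \<in> stair n" using stair_convex[of y n "(a, b)" z] x y by (auto simp: ple_def)
    then have "z \<in> I" using rhs z(1) by auto
    then show False using order_idealsD(2)[OF I _ _ z(2)] y by auto
  qed
  then show "ple_minimal (stair n - I) (a, b)" using rhs x by (auto simp: ple_minimal_def)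
qed

lemma ple_maximal_stair_iff:
  assumes I: "I \<in> order_ideals (stair n)"
  shows "ple_maximal I (a, b) \<longleftrightarrow> (a, b) \<in> I \<and> (a + 1, b) \<notin> I \<and> (a, b + 1) \<notin> I"
    (is "_ \<longleftrightarrow> ?rhs")
proof
  assume "ple_maximal I (a, b)"
  then show ?rhs by (auto simp: ple_maximal_def ple_def)
next
  assume rhs: ?rhs
  have "y = (a, b)" if y: "y \<in> I" "ple (a, b) y" for y
  proof (rule ccontr)
    assume "y \<noteq> (a, b)"
    then obtain z where z: "z \<in> {(a + 1, b), (a, b + 1)}" "ple z y"
      using ple_upper_neighbour[OF y(2)] by blast
    have "(a, b) \<in> stair n" "y \<in> stair n" using rhs y order_idealsD(1)[OF I] by auto
    then have "z \<in> stair n" using stair_convex[of "(a, b)" n y z] z by (auto simp: ple_def)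
    then have "z \<in> I" using order_idealsD(2)[OF I y(1) _ z(2)] by blast
    then show False using rhs z(1) by auto
  qed
  then show "ple_maximal I (a, b)" using rhs by (auto simp: ple_maximal_def)
qed

lemma toggle_stair:
  assumes "I \<in> order_ideals (stair n)" "(a, b) \<in> stair n"
  shows "toggle (stair n) (a, b) I =
    (if (a, b) \<notin> I \<and> ((a - 1, b) \<in> stair n \<longrightarrow> (a - 1, b) \<in> I)
        \<and> ((a, b - 1) \<in> stair n \<longrightarrow> (a, b - 1) \<in> I) then 1 else 0)
    - (if (a, b) \<in> I \<and> (a + 1, b) \<notin> I \<and> (a, b + 1) \<notin> I then 1 else 0)"
  using assms by (simp add: toggle_eq ple_minimal_stair_Diff_iff ple_maximal_stair_iff)

definition toggle_coeff :: "nat \<Rightarrow> nat \<times> nat \<Rightarrow> real" where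
  "toggle_coeff n x = (if even (rk n x) then - 1 / 2 else 0)"

context
  fixes n i j :: nat and I :: "(nat \<times> nat) set"
  assumes ideal: "I \<in> order_ideals (stair n)" and maximal: "ple_maximal I (i, j)"
begin

lemma maximal_in_stair: "(i, j) \<in> stair n"
  using ideal maximal by (auto simp: ple_maximal_def dest: order_idealsD)

lemma ideal_Diff_maximal: "I - {(i, j)} \<in> order_ideals (stair n)"
  using order_ideals_Diff_maximal[OF ideal maximal] .

lemma toggle_change_far:
  assumes "x \<in> stair n" "x \<notin> {(i, j), (i - 1, j), (i, j + 1), (i, j - 1), (i + 1, j)}"
  shows "toggle_change (stair n) I (i, j) x = 0"
proof -
  obtain a b where x: "x = (a, b)" by (cases x)
  have "(a, b) \<noteq> (i, j)" "(a - 1, b) \<noteq> (i, j)" "(a, b - 1) \<noteq> (i, j)"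
    "(a + 1, b) \<noteq> (i, j)" "(a, b + 1) \<noteq> (i, j)"
    using assms maximal_in_stair unfolding x by (auto simp: stair_def)
  then show ?thesis
    using assms(1) unfolding x
    by (simp add: toggle_change_def toggle_stair[OF ideal] toggle_stair[OF ideal_Diff_maximal])
qed

lemma sum_toggle_change_eq_sum_neighbours:
  "(\<Sum>x\<in>stair n. w x * toggle_change (stair n) I (i, j) x)
     = (\<Sum>x\<in>{(i, j), (i - 1, j), (i, j + 1), (i, j - 1), (i + 1, j)}.
          w x * toggle_change (stair n) I (i, j) x)"
  using toggle_change_far toggle_change_outside[OF order_idealsD(1)[OF ideal]]
  by (intro sum.mono_neutral_cong) (auto simp: finite_stair)

lemma toggle_change_fst_pair:
  assumes "(i - 1, j) \<in> stair n"
  shows "toggle_change (stair n) I (i, j) (i - 1, j) + toggle_change (stair n) I (i, j) (i, j + 1) = 1"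
proof -
  have ij: "(i, j) \<in> I" "i - 1 \<noteq> i" "(i, j + 1) \<notin> I"
    using maximal maximal_in_stair ple_maximal_stair_iff[OF ideal] by (auto simp: stair_def)
  have "(i - 1, j) \<in> I" using order_idealsD(2)[OF ideal ij(1) assms] by (simp add: ple_def)
  then have below: "toggle_change (stair n) I (i, j) (i - 1, j) = (if (i - 1, j + 1) \<in> I then 0 else 1)"
    using ij assms
    by (simp add: toggle_change_def toggle_stair[OF ideal] toggle_stair[OF ideal_Diff_maximal])
  show ?thesis
  proof (cases "(i, j + 1) \<in> stair n")
    case True
    then have "(i - 1, j + 1) \<in> stair n" using assms by (auto simp: stair_def)
    then have "toggle_change (stair n) I (i, j) (i, j + 1) = (if (i - 1, j + 1) \<in> I then 1 else 0)"
      using ij True maximal_in_stair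
      by (simp add: toggle_change_def toggle_stair[OF ideal] toggle_stair[OF ideal_Diff_maximal])
    then show ?thesis using below by simp
  next
    case False
    then have "(i - 1, j + 1) \<notin> stair n" using maximal_in_stair by (auto simp: stair_def)
    then have "(i - 1, j + 1) \<notin> I" using order_idealsD(1)[OF ideal] by blast
    then show ?thesis using below False toggle_change_outside[OF order_idealsD(1)[OF ideal]] by simp
  qed
qed

lemma toggle_change_snd_pair:
  assumes "(i, j - 1) \<in> stair n"
  shows "toggle_change (stair n) I (i, j) (i, j - 1) + toggle_change (stair n) I (i, j) (i + 1, j) = 1"
proof -
  have ij: "(i, j) \<in> I" "j - 1 \<noteq> j" "(i + 1, j) \<notin> I"
    using maximal maximal_in_stair ple_maximal_stair_iff[OF ideal] by (auto simp: stair_def)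
  have "(i, j - 1) \<in> I" using order_idealsD(2)[OF ideal ij(1) assms] by (simp add: ple_def)
  then have below: "toggle_change (stair n) I (i, j) (i, j - 1) = (if (i + 1, j - 1) \<in> I then 0 else 1)"
    using ij assms
    by (simp add: toggle_change_def toggle_stair[OF ideal] toggle_stair[OF ideal_Diff_maximal])
  show ?thesis
  proof (cases "(i + 1, j) \<in> stair n")
    case True
    then have "(i + 1, j - 1) \<in> stair n" using assms by (auto simp: stair_def)
    then have "toggle_change (stair n) I (i, j) (i + 1, j) = (if (i + 1, j - 1) \<in> I then 1 else 0)"
      using ij True maximal_in_stair
      by (simp add: toggle_change_def toggle_stair[OF ideal] toggle_stair[OF ideal_Diff_maximal])
    then show ?thesis using below by simp
  next
    case False
    then have "(i + 1, j - 1) \<notin> stair n" using maximal_in_stair by (auto simp: stair_def)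
    then have "(i + 1, j - 1) \<notin> I" using order_idealsD(1)[OF ideal] by blast
    then show ?thesis using below False toggle_change_outside[OF order_idealsD(1)[OF ideal]] by simp
  qed
qed

lemma toggle_coeff_sum_Diff_maximal:
  "(\<Sum>x\<in>stair n. toggle_coeff n x * toggle (stair n) x I)
     - (\<Sum>x\<in>stair n. toggle_coeff n x * toggle (stair n) x (I - {(i, j)})) = (-1) ^ rk n (i, j)"
proof -
  define D where "D x = toggle_coeff n x * toggle_change (stair n) I (i, j) x" for x
  have ij: "i + j \<ge> n + 1" "1 \<le> i" "1 \<le> j" "i \<noteq> i - 1" "j \<noteq> j - 1"
    using maximal_in_stair by (auto simp: stair_def)
  have "(\<Sum>x\<in>stair n. toggle_coeff n x * toggle (stair n) x I)
      - (\<Sum>x\<in>stair n. toggle_coeff n x * toggle (stair n) x (I - {(i, j)})) = (\<Sum>x\<in>stair n. D x)"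
    by (simp add: D_def toggle_change_def sum_subtractf right_diff_distrib)
  also have "\<dots> = D (i, j) + (D (i - 1, j) + D (i, j + 1)) + (D (i, j - 1) + D (i + 1, j))"
    using ij by (simp add: D_def sum_toggle_change_eq_sum_neighbours)
  also have "\<dots> = (-1) ^ rk n (i, j)"
  proof (cases "even (rk n (i, j))")
    case True
    have "D x = 0" if "x \<in> {(i - 1, j), (i, j + 1), (i, j - 1), (i + 1, j)}" for x
    proof (cases "x \<in> stair n")
      case True
      then have "odd (rk n x)" using that \<open>even (rk n (i, j))\<close> ij by (auto simp: rk_def stair_def)
      then show ?thesis by (simp add: D_def toggle_coeff_def)
    next
      case False
      then show ?thesis
        using toggle_change_outside[OF order_idealsD(1)[OF ideal]] by (simp add: D_def)
    qed
    moreover have "D (i, j) = 1"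
      using True toggle_change_maximal_self[OF ideal maximal] by (simp add: D_def toggle_coeff_def)
    ultimately show ?thesis using True by simp
  next
    case False
    then have "rk n (i, j) \<noteq> 0" by (metis even_zero)
    then have "i + j \<ge> n + 2" by (simp add: rk_def)
    then have "(i - 1, j) \<in> stair n" "(i, j - 1) \<in> stair n"
      using maximal_in_stair by (auto simp: stair_def)
    moreover have "toggle_coeff n x = - 1 / 2"
      if "x \<in> {(i - 1, j), (i, j + 1), (i, j - 1), (i + 1, j)}" for x
      using that False \<open>i + j \<ge> n + 2\<close> ij by (auto simp: toggle_coeff_def rk_def)
    ultimately show ?thesis
      using False toggle_change_fst_pair toggle_change_snd_pair
      by (simp add: D_def toggle_coeff_def algebra_simps)
  qed
  finally show ?thesis .
qed

end

lemma toggle_stair_empty: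
  assumes "x \<in> stair n"
  shows "toggle (stair n) x {} = (if rk n x = 0 then 1 else 0)"
proof -
  obtain a b where x: "x = (a, b)" by (cases x)
  have "{} \<in> order_ideals (stair n)" by (simp add: order_ideals_def)
  then have "toggle (stair n) (a, b) {}
      = (if (a - 1, b) \<notin> stair n \<and> (a, b - 1) \<notin> stair n then 1 else 0)"
    using assms unfolding x by (simp add: toggle_stair)
  then show ?thesis using assms unfolding x by (auto simp: stair_def rk_def)
qed

lemma card_stair_rk_zero: "card {x \<in> stair n. rk n x = 0} = n"
proof -
  have "{x \<in> stair n. rk n x = 0} = (\<lambda>a. (a, n + 1 - a)) ` {1..n}"
    by (auto simp: stair_def rk_def image_iff)
  moreover have "inj_on (\<lambda>a. (a, n + 1 - a)) {1..n}" by (auto simp: inj_on_def)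
  ultimately show ?thesis by (simp add: card_image)
qed

lemma toggle_coeff_sum_empty:
  "(\<Sum>x\<in>stair n. toggle_coeff n x * toggle (stair n) x {}) = - real n / 2"
proof -
  have "(\<Sum>x\<in>stair n. toggle_coeff n x * toggle (stair n) x {})
      = (\<Sum>x\<in>stair n. if rk n x = 0 then - 1 / 2 else 0)"
    by (rule sum.cong) (simp_all add: toggle_stair_empty toggle_coeff_def)
  also have "\<dots> = - 1 / 2 * card {x \<in> stair n. rk n x = 0}"
    by (simp add: sum.If_cases finite_stair Int_def)
  finally show ?thesis by (simp add: card_stair_rk_zero)
qed

lemma signed_count_eq_toggle_coeff_sum:
  assumes "I \<in> order_ideals (stair n)"
  shows "(\<Sum>p\<in>stair n. (-1) ^ rk n p * indic p I) - real n / 2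
           = (\<Sum>x\<in>stair n. toggle_coeff n x * toggle (stair n) x I)"
  using finite_stair assms
proof (induction I rule: order_ideal_induct)
  case empty
  then show ?case by (simp add: indic_def toggle_coeff_sum_empty)
next
  case (remove_maximal I m)
  obtain i j where m: "m = (i, j)" by (cases m)
  have "m \<in> I" "I \<subseteq> stair n"
    using remove_maximal.hyps by (auto simp: ple_maximal_def dest: order_idealsD)
  then show ?case
    using remove_maximal.IH
      sum_indic_Diff[OF finite_stair \<open>I \<subseteq> stair n\<close> \<open>m \<in> I\<close>, of "\<lambda>p. (-1) ^ rk n p"]
      toggle_coeff_sum_Diff_maximal[OF remove_maximal.hyps[unfolded m]]
    unfolding m by linarith
qed

theorem corollary3p29:
  fixes n :: nat
  assumes "n \<ge> 1"
  shows "toggle_equiv (stair n)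
           (\<lambda>I. \<Sum>p\<in>stair n. (-1::real) ^ rk n p * indic p I)
           (\<lambda>_. real n / 2)"
  (* n = 0 is fine as well: stair 0 is empty and both sides vanish. *)
  unfolding toggle_equiv_def
  by (intro exI[of _ "toggle_coeff n"] ballI) (rule signed_count_eq_toggle_coeff_sum)

end
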